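(* Let $\mathcal{R}\subseteq\mathbb{R}^{\mathcal{S}\times\mathcal{A}}$ be a nonempty compact convex set. Then there exists a stationary policy $\pi\in\Pi$ that achieves the maximal robust return over all (history-dependent, randomized) policies, i.e. $$\min_{R\in\mathcal{R}}\mathbb{E}\Big[\sum_{t=0}^\infty\gamma^tR(s_t,a_t)\,\Big|\,s_0\sim\mu,\ a_t\sim\pi(\cdot|s_t),\ s_{t+1}\sim P(\cdot|s_t,a_t)\Big]=\sup_{\pi'}\min_{R\in\mathcal{R}}\mathbb{E}\Big[\sum_{t=0}^\infty\gamma^tR(s_t,a_t)\,\Big|\,s_0\sim\mu,\ a_t\sim\pi'_t(\cdot|h_t),\ s_{t+1}\sim P(\cdot|s_t,a_t)\Big],$$ where the supremum ranges over all history-dependent randomized policies $\pi'=(\pi'_t)_{t\ge0}$.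
   Context: Finite MDP with finite state space $\mathcal{S}$, finite action space $\mathcal{A}$, transition kernel $P$, discount factor $\gamma\in[0,1)$ and initial distribution $\mu\in\Delta_{\mathcal{S}}$ with $\mu(s)>0$ for all $s$. The reward $R$ is unknown but lies in the uncertainty set $\mathcal{R}$. A history-dependent randomized policy is a sequence of decision rules $\pi'_t$ mapping the history $h_t=(s_0,a_0,\dots,s_t)$ to a distribution over $\mathcal{A}$; $\Pi$ denotes the set of stationary randomized policies $\pi:\mathcal{S}\to\Delta_{\mathcal{A}}$. *)

theory Defs
  imports "HOL-Analysis.Analysis" "HOL-Probability.Probability_Mass_Function"
begin

text \<open>A history-dependent randomized policy is a function
  pi t h s :: 'a pmf, where h = [(s_0,a_0),...,(s_{t-1},a_{t-1})] and s = s_t,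
  i.e. the history h_t = (s_0,a_0,...,s_t).\<close>

type_synonym ('s,'a) hpolicy = "nat \<Rightarrow> ('s \<times> 'a) list \<Rightarrow> 's \<Rightarrow> 'a pmf"

fun hist_dist :: "('s \<Rightarrow> 'a \<Rightarrow> 's pmf) \<Rightarrow> 's pmf \<Rightarrow> ('s,'a) hpolicy \<Rightarrow> nat
    \<Rightarrow> (('s \<times> 'a) list \<times> 's) pmf" where
  "hist_dist P mu pol 0 = map_pmf (\<lambda>s. ([], s)) mu"
| "hist_dist P mu pol (Suc t) =
     bind_pmf (hist_dist P mu pol t) (\<lambda>(h, s).
       bind_pmf (pol t h s) (\<lambda>a.
         map_pmf (\<lambda>s'. (h @ [(s, a)], s')) (P s a)))"

definition sa_dist :: "('s \<Rightarrow> 'a \<Rightarrow> 's pmf) \<Rightarrow> 's pmf \<Rightarrow> ('s,'a) hpolicy \<Rightarrow> nat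
    \<Rightarrow> ('s \<times> 'a) pmf" where
  "sa_dist P mu pol t =
     bind_pmf (hist_dist P mu pol t) (\<lambda>(h, s). map_pmf (\<lambda>a. (s, a)) (pol t h s))"

definition disc_return :: "('s::finite \<Rightarrow> 'a::finite \<Rightarrow> 's pmf) \<Rightarrow> 's pmf \<Rightarrow> real \<Rightarrow> ('s,'a) hpolicy
    \<Rightarrow> real ^ ('s \<times> 'a) \<Rightarrow> real" where
  "disc_return P mu \<gamma> pol R =
     (\<Sum>t. \<gamma> ^ t * measure_pmf.expectation (sa_dist P mu pol t) (\<lambda>sa. R $ sa))"

definition stationary :: "('s \<Rightarrow> 'a pmf) \<Rightarrow> ('s,'a) hpolicy" where
  "stationary \<pi> = (\<lambda>t h s. \<pi> s)"

end

theory Submission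
  imports Defs
begin

text \<open>The expected discounted return of a policy is linear in its discounted
  state-action occupancy measure d(s,a) = \<Sum>t. \<gamma>^t Pr(s_t = s, a_t = a). Occupancy measures
  satisfy the Bellman flow constraints, which cut out a compact polytope of total mass
  1/(1-\<gamma>). Conversely, every point d of this polytope is the occupancy measure of the
  stationary policy \<pi>(a|s) = d(s,a) / (\<Sum>a'. d(s,a')): both state marginals solve the same flow
  equation, whose homogeneous version has only the trivial solution because the adjoint of a
  stochastic kernel does not increase the l1-norm. The robust value d \<mapsto> inf {R \<bullet> d | R \<in> Rset}
  is Lipschitz, hence attains its maximum on the polytope, at the occupancy measure of a
  stationary policy.\<close>

lemma sum_UNIV_pair:
  fixes f :: "'s::finite \<times> 'a::finite \<Rightarrow> 'b::comm_monoid_add"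
  shows "(\<Sum>sa\<in>UNIV. f sa) = (\<Sum>s\<in>UNIV. \<Sum>a\<in>UNIV. f (s, a))"
  by (simp add: sum.cartesian_product UNIV_Times_UNIV[symmetric] case_prod_beta del: UNIV_Times_UNIV)

lemma pmf_bind_finite:
  fixes X :: "'b::finite pmf"
  shows "pmf (bind_pmf X f) y = (\<Sum>x\<in>UNIV. pmf X x * pmf (f x) y)"
  by (simp add: pmf_bind integral_measure_pmf_real[where A=UNIV] mult.commute)

lemma pmf_map_fst_finite:
  fixes X :: "('s \<times> 'a::finite) pmf"
  shows "pmf (map_pmf fst X) s = (\<Sum>a\<in>UNIV. pmf X (s, a))"
proof -
  have "fst -` {s} = Pair s ` (UNIV :: 'a set)" by auto
  then have "pmf (map_pmf fst X) s = measure X (Pair s ` UNIV)" by (simp add: pmf_map)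
  also have "\<dots> = (\<Sum>a\<in>UNIV. pmf X (s, a))"
    by (subst measure_measure_pmf_finite) (auto simp: sum.reindex inj_on_def)
  finally show ?thesis .
qed

lemma discounted_adjoint_fixpoint_eq_0:
  fixes z :: "'s::finite \<Rightarrow> real" and Q :: "'s \<Rightarrow> 's pmf"
  assumes "0 \<le> \<gamma>" "\<gamma> < 1"
    and fp: "\<And>s'. z s' = \<gamma> * (\<Sum>s\<in>UNIV. pmf (Q s) s' * z s)"
  shows "z s = 0"
proof -
  let ?S = "\<Sum>s\<in>UNIV. \<bar>z s\<bar>"
  have "?S \<le> (\<Sum>s'\<in>UNIV. \<gamma> * (\<Sum>s\<in>UNIV. pmf (Q s) s' * \<bar>z s\<bar>))"
  proof (rule sum_mono)
    fix s'
    have "\<bar>z s'\<bar> = \<gamma> * \<bar>\<Sum>s\<in>UNIV. pmf (Q s) s' * z s\<bar>"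
      using assms(1) by (subst fp) (simp add: abs_mult)
    also have "\<dots> \<le> \<gamma> * (\<Sum>s\<in>UNIV. pmf (Q s) s' * \<bar>z s\<bar>)"
      using assms(1) sum_abs[of "\<lambda>s. pmf (Q s) s' * z s" UNIV]
      by (intro mult_left_mono) (simp_all add: abs_mult)
    finally show "\<bar>z s'\<bar> \<le> \<gamma> * (\<Sum>s\<in>UNIV. pmf (Q s) s' * \<bar>z s\<bar>)" .
  qed
  also have "\<dots> = \<gamma> * (\<Sum>s\<in>UNIV. (\<Sum>s'\<in>UNIV. pmf (Q s) s') * \<bar>z s\<bar>)"
    by (simp add: sum_distrib_left sum_distrib_right mult_ac) (rule sum.swap)
  also have "\<dots> = \<gamma> * ?S"
    by (simp add: sum_pmf_eq_1)
  finally have "(1 - \<gamma>) * ?S \<le> 0" by (simp add: algebra_simps)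
  with assms(2) have "?S \<le> 0" by (simp add: mult_le_0_iff)
  moreover have "\<bar>z s\<bar> \<le> ?S"
    by (rule member_le_sum) auto
  ultimately show ?thesis
    by simp
qed

lemma summable_discounted_pmf:
  fixes \<gamma> :: real
  assumes "0 \<le> \<gamma>" "\<gamma> < 1"
  shows "summable (\<lambda>t. \<gamma> ^ t * pmf (X t) x)"
proof (rule summable_comparison_test'[OF summable_geometric[of \<gamma>]])
  show "norm (\<gamma> ^ t * pmf (X t) x) \<le> \<gamma> ^ t" for t
    using assms by (simp add: mult_left_le pmf_le_1)
qed (use assms in auto)

lemma continuous_on_INF_inner:
  fixes Rset :: "'v::real_inner set"
  assumes "bounded Rset" "Rset \<noteq> {}"
  shows "continuous_on A (\<lambda>d. INF R\<in>Rset. R \<bullet> d)"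
proof -
  obtain B where B: "B > 0" "\<And>R. R \<in> Rset \<Longrightarrow> norm R \<le> B"
    using assms(1) unfolding bounded_pos by blast
  have inner_le: "R \<bullet> d \<le> B * norm d" if "R \<in> Rset" for R d
    using norm_cauchy_schwarz[of R d] mult_right_mono[OF B(2)[OF that] norm_ge_zero[of d]]
    by linarith
  have bdd: "bdd_below ((\<lambda>R. R \<bullet> d) ` Rset)" for d
  proof (rule bdd_belowI2)
    show "- (B * norm d) \<le> R \<bullet> d" if "R \<in> Rset" for R
      using inner_le[OF that, of "- d"] by simp
  qed
  have INF_le: "(INF R\<in>Rset. R \<bullet> d) \<le> (INF R\<in>Rset. R \<bullet> d') + B * dist d d'" for d d'
  proof -
    have "(INF R\<in>Rset. R \<bullet> d) - B * dist d d' \<le> (INF R\<in>Rset. R \<bullet> d')"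
    proof (rule cINF_greatest[OF assms(2)])
      fix R assume R: "R \<in> Rset"
      have "(INF R\<in>Rset. R \<bullet> d) \<le> R \<bullet> d"
        by (rule cINF_lower[OF bdd R])
      also have "\<dots> = R \<bullet> d' + R \<bullet> (d - d')"
        by (simp add: inner_diff_right)
      also have "\<dots> \<le> R \<bullet> d' + B * dist d d'"
        using inner_le[OF R, of "d - d'"] by (simp add: dist_norm)
      finally show "(INF R\<in>Rset. R \<bullet> d) - B * dist d d' \<le> R \<bullet> d'"
        by simp
    qed
    then show ?thesis
      by linarith
  qed
  have "B-lipschitz_on A (\<lambda>d. INF R\<in>Rset. R \<bullet> d)"
  proof (rule lipschitz_onI)
    show "dist (INF R\<in>Rset. R \<bullet> d) (INF R\<in>Rset. R \<bullet> d') \<le> B * dist d d'" for d d'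
      using INF_le[of d d'] INF_le[of d' d] by (simp add: dist_real_def dist_commute abs_le_iff)
  qed (use B in simp)
  then show ?thesis
    by (rule lipschitz_on_continuous_on)
qed

definition state_dist :: "('s \<Rightarrow> 'a \<Rightarrow> 's pmf) \<Rightarrow> 's pmf \<Rightarrow> ('s,'a) hpolicy \<Rightarrow> nat \<Rightarrow> 's pmf" where
  "state_dist P mu pol t = map_pmf snd (hist_dist P mu pol t)"

lemma state_dist_0: "state_dist P mu pol 0 = mu"
  by (simp add: state_dist_def map_pmf_comp)

lemma state_dist_Suc:
  "state_dist P mu pol (Suc t) = bind_pmf (sa_dist P mu pol t) (\<lambda>(s, a). P s a)"
  unfolding sa_dist_def state_dist_def
  by (simp add: map_bind_pmf bind_assoc_pmf bind_map_pmf map_pmf_comp split_beta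
      map_pmf_def[symmetric])

lemma map_fst_sa_dist: "map_pmf fst (sa_dist P mu pol t) = state_dist P mu pol t"
  unfolding sa_dist_def state_dist_def map_bind_pmf
  by (simp add: map_pmf_comp split_beta map_pmf_def[symmetric] map_pmf_const)

lemma pmf_sa_dist_stationary:
  fixes \<pi> :: "'s::finite \<Rightarrow> 'a pmf"
  shows "pmf (sa_dist P mu (stationary \<pi>) t) (s, a)
           = pmf (state_dist P mu (stationary \<pi>) t) s * pmf (\<pi> s) a"
proof -
  have "sa_dist P mu (stationary \<pi>) t
          = bind_pmf (state_dist P mu (stationary \<pi>) t) (\<lambda>s. map_pmf (Pair s) (\<pi> s))"
    unfolding sa_dist_def state_dist_def stationary_def bind_map_pmf
    by (intro bind_pmf_cong) auto
  also have "pmf \<dots> (s, a) = (\<Sum>s'\<in>UNIV. if s' = s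
      then pmf (state_dist P mu (stationary \<pi>) t) s * pmf (\<pi> s) a else 0)"
    unfolding pmf_bind_finite
    by (intro sum.cong) (auto simp: pmf_map_inj' inj_on_def intro!: pmf_map_outside)
  finally show ?thesis
    by simp
qed

definition occupancy :: "('s::finite \<Rightarrow> 'a::finite \<Rightarrow> 's pmf) \<Rightarrow> 's pmf \<Rightarrow> real
    \<Rightarrow> ('s,'a) hpolicy \<Rightarrow> real ^ ('s \<times> 'a)" where
  "occupancy P mu \<gamma> pol = (\<chi> sa. \<Sum>t. \<gamma> ^ t * pmf (sa_dist P mu pol t) sa)"

lemma disc_return_eq_inner_occupancy:
  assumes "0 \<le> \<gamma>" "\<gamma> < 1"
  shows "disc_return P mu \<gamma> pol R = R \<bullet> occupancy P mu \<gamma> pol"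
proof -
  have "disc_return P mu \<gamma> pol R
          = (\<Sum>t. \<Sum>sa\<in>UNIV. R $ sa * (\<gamma> ^ t * pmf (sa_dist P mu pol t) sa))"
    unfolding disc_return_def
    by (simp add: integral_measure_pmf_real[where A=UNIV] sum_distrib_left mult_ac)
  also have "\<dots> = (\<Sum>sa\<in>UNIV. R $ sa * (\<Sum>t. \<gamma> ^ t * pmf (sa_dist P mu pol t) sa))"
    using assms by (simp add: suminf_sum suminf_mult summable_discounted_pmf)
  finally show ?thesis
    by (simp add: inner_vec_def occupancy_def)
qed

lemma occupancy_nonneg: "0 \<le> \<gamma> \<Longrightarrow> \<gamma> < 1 \<Longrightarrow> 0 \<le> occupancy P mu \<gamma> pol $ sa"
  unfolding occupancy_def by (simp add: suminf_nonneg summable_discounted_pmf)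

lemma sum_occupancy_eq_discounted_state_dist:
  assumes "0 \<le> \<gamma>" "\<gamma> < 1"
  shows "(\<Sum>a\<in>UNIV. occupancy P mu \<gamma> pol $ (s, a))
           = (\<Sum>t. \<gamma> ^ t * pmf (state_dist P mu pol t) s)"
proof -
  have "(\<Sum>a\<in>UNIV. occupancy P mu \<gamma> pol $ (s, a))
          = (\<Sum>t. \<Sum>a\<in>UNIV. \<gamma> ^ t * pmf (sa_dist P mu pol t) (s, a))"
    unfolding occupancy_def using assms by (simp add: suminf_sum summable_discounted_pmf)
  then show ?thesis
    by (simp add: sum_distrib_left[symmetric] pmf_map_fst_finite[symmetric] map_fst_sa_dist)
qed

definition flow_polytope :: "('s::finite \<Rightarrow> 'a::finite \<Rightarrow> 's pmf) \<Rightarrow> 's pmf \<Rightarrow> real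
    \<Rightarrow> (real ^ ('s \<times> 'a)) set" where
  "flow_polytope P mu \<gamma> = {d. (\<forall>sa. 0 \<le> d $ sa) \<and> (\<forall>s'.
     (\<Sum>a\<in>UNIV. d $ (s', a)) = pmf mu s' + \<gamma> * (\<Sum>(s, a)\<in>UNIV. pmf (P s a) s' * d $ (s, a)))}"

lemma occupancy_in_flow_polytope:
  assumes "0 \<le> \<gamma>" "\<gamma> < 1"
  shows "occupancy P mu \<gamma> pol \<in> flow_polytope P mu \<gamma>"
proof -
  let ?d = "occupancy P mu \<gamma> pol"
  have "(\<Sum>a\<in>UNIV. ?d $ (s', a)) = pmf mu s' + \<gamma> * (\<Sum>(s, a)\<in>UNIV. pmf (P s a) s' * ?d $ (s, a))"
    for s'
  proof -
    let ?q = "\<lambda>t. \<gamma> ^ t * pmf (state_dist P mu pol t) s'"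
    let ?r = "\<lambda>t (s, a). pmf (P s a) s' * (\<gamma> ^ t * pmf (sa_dist P mu pol t) (s, a))"
    have "(\<Sum>a\<in>UNIV. ?d $ (s', a)) = (\<Sum>t. ?q t)"
      by (rule sum_occupancy_eq_discounted_state_dist[OF assms])
    also have "\<dots> = ?q 0 + (\<Sum>t. ?q (Suc t))"
      using suminf_split_head[OF summable_discounted_pmf[OF assms, of "state_dist P mu pol" s']]
      by linarith
    also have "(\<Sum>t. ?q (Suc t)) = (\<Sum>t. \<gamma> * (\<Sum>sa\<in>UNIV. ?r t sa))"
      by (simp add: state_dist_Suc pmf_bind_finite sum_distrib_left split_beta mult_ac)
    also have "\<dots> = \<gamma> * (\<Sum>sa\<in>UNIV. \<Sum>t. ?r t sa)"
      using assms
      by (simp add: suminf_mult summable_sum summable_mult summable_discounted_pmf suminf_sum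
          split_beta)
    also have "(\<Sum>sa\<in>UNIV. \<Sum>t. ?r t sa) = (\<Sum>(s, a)\<in>UNIV. pmf (P s a) s' * ?d $ (s, a))"
      using assms
      by (intro sum.cong) (auto simp: occupancy_def suminf_mult summable_discounted_pmf)
    finally show ?thesis
      by (simp add: state_dist_0)
  qed
  then show ?thesis
    using assms by (simp add: flow_polytope_def occupancy_nonneg)
qed

lemma sum_flow_polytope:
  assumes "\<gamma> < 1" and d: "d \<in> flow_polytope P mu \<gamma>"
  shows "(\<Sum>sa\<in>UNIV. d $ sa) = 1 / (1 - \<gamma>)"
proof -
  let ?T = "\<Sum>sa\<in>UNIV. d $ sa"
  have "?T = (\<Sum>s'\<in>UNIV. \<Sum>a\<in>UNIV. d $ (s', a))"
    by (rule sum_UNIV_pair)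
  also have "\<dots> = (\<Sum>s'\<in>UNIV. pmf mu s')
      + \<gamma> * (\<Sum>s'\<in>UNIV. \<Sum>(s, a)\<in>UNIV. pmf (P s a) s' * d $ (s, a))"
    using d by (simp add: flow_polytope_def sum.distrib sum_distrib_left)
  also have "(\<Sum>s'\<in>UNIV. \<Sum>(s, a)\<in>UNIV. pmf (P s a) s' * d $ (s, a))
      = (\<Sum>(s, a)\<in>UNIV. (\<Sum>s'\<in>UNIV. pmf (P s a) s') * d $ (s, a))"
    by (subst sum.swap) (simp add: sum_distrib_right split_beta)
  finally have "?T = 1 + \<gamma> * ?T"
    by (simp add: sum_pmf_eq_1 split_beta)
  with assms(1) show ?thesis
    by (simp add: field_simps)
qed

lemma compact_flow_polytope:
  assumes "\<gamma> < 1"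
  shows "compact (flow_polytope P mu \<gamma>)"
  unfolding compact_eq_bounded_closed
proof
  have "flow_polytope P mu \<gamma> \<subseteq> cbox 0 (\<chi> _. 1 / (1 - \<gamma>))"
  proof
    fix d assume d: "d \<in> flow_polytope P mu \<gamma>"
    then have "0 \<le> d $ sa" for sa
      by (cases sa) (simp add: flow_polytope_def)
    moreover have "d $ sa \<le> 1 / (1 - \<gamma>)" for sa
      using member_le_sum[of sa UNIV "\<lambda>sa. d $ sa"] sum_flow_polytope[OF assms d] calculation
      by simp
    ultimately show "d \<in> cbox 0 (\<chi> _. 1 / (1 - \<gamma>))"
      by (simp add: mem_box_cart)
  qed
  then show "bounded (flow_polytope P mu \<gamma>)"
    by (rule bounded_subset[OF bounded_cbox])
  show "closed (flow_polytope P mu \<gamma>)"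
    unfolding flow_polytope_def split_beta
    by (intro closed_Collect_conj closed_Collect_all closed_Collect_le closed_Collect_eq
        continuous_intros)
qed

lemma occupancy_stationary_factor:
  assumes "0 \<le> \<gamma>" "\<gamma> < 1"
  shows "occupancy P mu \<gamma> (stationary \<pi>) $ (s, a)
           = (\<Sum>a'\<in>UNIV. occupancy P mu \<gamma> (stationary \<pi>) $ (s, a')) * pmf (\<pi> s) a"
  using assms
  by (simp add: sum_occupancy_eq_discounted_state_dist suminf_mult2 summable_discounted_pmf)
     (simp add: occupancy_def pmf_sa_dist_stationary mult_ac)

lemma flow_polytope_marginal_eq:
  assumes "d \<in> flow_polytope P mu \<gamma>" and d: "\<And>s a. d $ (s, a) = m s * pmf (\<pi> s) a"
  shows "m s' = pmf mu s' + \<gamma> * (\<Sum>s\<in>UNIV. pmf (bind_pmf (\<pi> s) (P s)) s' * m s)"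
proof -
  have "m s' = (\<Sum>a\<in>UNIV. d $ (s', a))"
    by (simp add: d sum_distrib_left[symmetric] sum_pmf_eq_1)
  also have "\<dots> = pmf mu s' + \<gamma> * (\<Sum>(s, a)\<in>UNIV. pmf (P s a) s' * d $ (s, a))"
    using assms(1) by (simp add: flow_polytope_def)
  also have "(\<Sum>(s, a)\<in>UNIV. pmf (P s a) s' * d $ (s, a))
               = (\<Sum>s\<in>UNIV. pmf (bind_pmf (\<pi> s) (P s)) s' * m s)"
    by (subst sum_UNIV_pair) (simp add: d pmf_bind_finite sum_distrib_left mult_ac)
  finally show ?thesis .
qed

lemma flow_polytope_imp_stationary_occupancy:
  assumes "0 \<le> \<gamma>" "\<gamma> < 1" and d: "d \<in> flow_polytope P mu \<gamma>"
  obtains \<pi> where "occupancy P mu \<gamma> (stationary \<pi>) = d"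
proof -
  define m where "m s = (\<Sum>a\<in>UNIV. d $ (s, a))" for s
  \<comment> \<open>On states of mass zero, any action distribution will do.\<close>
  define \<pi> where
    "\<pi> s = (if m s = 0 then return_pmf undefined else embed_pmf (\<lambda>a. d $ (s, a) / m s))" for s
  have d_nonneg: "0 \<le> d $ (s, a)" for s a
    using d by (simp add: flow_polytope_def)
  have d_factor: "d $ (s, a) = m s * pmf (\<pi> s) a" for s a
  proof (cases "m s = 0")
    case True
    then show ?thesis
      using d_nonneg by (simp add: m_def sum_nonneg_eq_0_iff)
  next
    case False
    have weights_nonneg: "0 \<le> d $ (s, a') / m s" for a'
      using d_nonneg by (simp add: m_def sum_nonneg)
    have weights_sum: "(\<Sum>a'\<in>UNIV. d $ (s, a') / m s) = 1"
      using False by (simp add: m_def sum_divide_distrib[symmetric])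
    have "pmf (\<pi> s) a = d $ (s, a) / m s"
      unfolding \<pi>_def using False
      by (simp add: pmf_embed_pmf nn_integral_count_space_finite weights_nonneg weights_sum)
    then show ?thesis
      using False by simp
  qed
  let ?e = "occupancy P mu \<gamma> (stationary \<pi>)"
  define me where "me s = (\<Sum>a\<in>UNIV. ?e $ (s, a))" for s
  have e_factor: "?e $ (s, a) = me s * pmf (\<pi> s) a" for s a
    unfolding me_def using assms(1,2) by (rule occupancy_stationary_factor)
  have "me s - m s = 0" for s
  proof (rule discounted_adjoint_fixpoint_eq_0[OF assms(1,2)])
    fix s'
    let ?Q = "\<lambda>s. pmf (bind_pmf (\<pi> s) (P s)) s'"
    have "\<gamma> * (\<Sum>s\<in>UNIV. ?Q s * (me s - m s))
        = \<gamma> * (\<Sum>s\<in>UNIV. ?Q s * me s) - \<gamma> * (\<Sum>s\<in>UNIV. ?Q s * m s)"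
      by (simp add: right_diff_distrib sum_subtractf)
    with flow_polytope_marginal_eq[OF occupancy_in_flow_polytope[OF assms(1,2)] e_factor, of s']
      flow_polytope_marginal_eq[OF d d_factor, of s']
    show "me s' - m s' = \<gamma> * (\<Sum>s\<in>UNIV. ?Q s * (me s - m s))"
      by linarith
  qed
  then have "?e = d"
    by (simp add: vec_eq_iff e_factor d_factor)
  then show ?thesis
    by (rule that)
qed

theorem lemma1:
  fixes P :: "'s::finite \<Rightarrow> 'a::finite \<Rightarrow> 's pmf"
    and mu :: "'s pmf"
    and \<gamma> :: real
    and Rset :: "(real ^ ('s \<times> 'a)) set"
  assumes "0 \<le> \<gamma>" and "\<gamma> < 1"
    and "\<forall>s. pmf mu s > 0"
    and "Rset \<noteq> {}" and "compact Rset" and "convex Rset"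
  shows "\<exists>\<pi> :: 's \<Rightarrow> 'a pmf.
           (INF R\<in>Rset. disc_return P mu \<gamma> (stationary \<pi>) R)
         = (SUP pol :: ('s,'a) hpolicy. INF R\<in>Rset. disc_return P mu \<gamma> pol R)"
proof -
  let ?D = "flow_polytope P mu \<gamma>"
  let ?F = "\<lambda>d. INF R\<in>Rset. R \<bullet> d"
  have robust_value: "(INF R\<in>Rset. disc_return P mu \<gamma> pol R) = ?F (occupancy P mu \<gamma> pol)" for pol
    using assms(1,2) by (simp add: disc_return_eq_inner_occupancy)
  have "?D \<noteq> {}"
    using occupancy_in_flow_polytope[OF assms(1,2)] by blast
  moreover have "continuous_on ?D ?F"
    using assms(4,5) by (intro continuous_on_INF_inner compact_imp_bounded)
  ultimately obtain d where d: "d \<in> ?D" and d_max: "\<And>d'. d' \<in> ?D \<Longrightarrow> ?F d' \<le> ?F d"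
    using continuous_attains_sup[OF compact_flow_polytope[OF assms(2)]] by blast
  obtain \<pi> where \<pi>: "occupancy P mu \<gamma> (stationary \<pi>) = d"
    using flow_polytope_imp_stationary_occupancy[OF assms(1,2) d] .
  have "(SUP pol. ?F (occupancy P mu \<gamma> pol)) = ?F (occupancy P mu \<gamma> (stationary \<pi>))"
    using \<pi> d_max occupancy_in_flow_polytope[OF assms(1,2)] by (intro cSup_eq_maximum) auto
  then have "(INF R\<in>Rset. disc_return P mu \<gamma> (stationary \<pi>) R)
      = (SUP pol. INF R\<in>Rset. disc_return P mu \<gamma> pol R)"
    unfolding robust_value by (rule sym)
  then show ?thesis
    by (rule exI[of _ \<pi>])
qed

end
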